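(* Let $X$ be a compact metric space and $T:X\to X$ a homeomorphism such that the $\mathbb{Z}$-system $(X,T)$ is minimal and tame. Then the topological entropy $h_{\rm top}(X,T)$ is zero.
   Context: The enveloping semigroup $E(X,T)$ is the pointwise closure in $X^X$ of $\{T^n:n\in\mathbb{Z}\}$. A space is Fréchet if every point in the closure of a set $A$ is a limit of a sequence from $A$. The system is tame if $E(X,T)$ is separable and Fréchet. Minimal: every orbit is dense. *)

theory Defs
  imports "HOL-Analysis.Analysis"
begin

text \<open>Integer iterates of a homeomorphism T of X (restricted to X, so they are
points of the function space X^X with the product (pointwise) topology).\<close>
definition zpow :: "'a set \<Rightarrow> ('a \<Rightarrow> 'a) \<Rightarrow> int \<Rightarrow> 'a \<Rightarrow> 'a" where
  "zpow X T n = (if n \<ge> 0 then T ^^ nat n else (inv_into X T) ^^ nat (- n))"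

definition ptwise_top :: "'a::topological_space set \<Rightarrow> ('a \<Rightarrow> 'a) topology" where
  "ptwise_top X = product_topology (\<lambda>_. top_of_set X) X"

definition enveloping_semigroup :: "'a::topological_space set \<Rightarrow> ('a \<Rightarrow> 'a) \<Rightarrow> ('a \<Rightarrow> 'a) set" where
  "enveloping_semigroup X T =
     (ptwise_top X) closure_of ((\<lambda>n. restrict (zpow X T n) X) ` UNIV)"

definition Frechet_space :: "'b topology \<Rightarrow> bool" where
  "Frechet_space S \<longleftrightarrow>
     (\<forall>A x. A \<subseteq> topspace S \<and> x \<in> S closure_of A \<longrightarrow>
        (\<exists>\<sigma>::nat \<Rightarrow> 'b. range \<sigma> \<subseteq> A \<and> limitin S \<sigma> x sequentially))"

definition tame :: "'a::topological_space set \<Rightarrow> ('a \<Rightarrow> 'a) \<Rightarrow> bool" where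
  "tame X T \<longleftrightarrow>
     separable_space (subtopology (ptwise_top X) (enveloping_semigroup X T)) \<and>
     Frechet_space (subtopology (ptwise_top X) (enveloping_semigroup X T))"

definition minimal_system :: "'a::topological_space set \<Rightarrow> ('a \<Rightarrow> 'a) \<Rightarrow> bool" where
  "minimal_system X T \<longleftrightarrow> (\<forall>x\<in>X. closure (range (\<lambda>n. zpow X T n x)) = X)"

definition separated_set :: "'a::metric_space set \<Rightarrow> ('a \<Rightarrow> 'a) \<Rightarrow> nat \<Rightarrow> real \<Rightarrow> 'a set \<Rightarrow> bool" where
  "separated_set X T n \<epsilon> S \<longleftrightarrow> S \<subseteq> X \<and>
     (\<forall>x\<in>S. \<forall>y\<in>S. x \<noteq> y \<longrightarrow> (\<exists>i<n. dist ((T ^^ i) x) ((T ^^ i) y) > \<epsilon>))"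

definition max_sep :: "'a::metric_space set \<Rightarrow> ('a \<Rightarrow> 'a) \<Rightarrow> nat \<Rightarrow> real \<Rightarrow> nat" where
  "max_sep X T n \<epsilon> = Sup {card S | S. finite S \<and> separated_set X T n \<epsilon> S}"

definition topological_entropy :: "'a::metric_space set \<Rightarrow> ('a \<Rightarrow> 'a) \<Rightarrow> ereal" where
  "topological_entropy X T =
     (SUP \<epsilon>\<in>{0<..}. limsup (\<lambda>n. ereal (ln (real (max_sep X T n \<epsilon>)) / real n)))"

end

theory Submission
  imports Defs
begin

definition independence_set :: "'a set \<Rightarrow> ('a \<Rightarrow> 'a) \<Rightarrow> 'a set \<Rightarrow> 'a set \<Rightarrow> nat set \<Rightarrow> bool" where
  "independence_set X T A0 A1 I \<longleftrightarrow>
     (\<forall>\<xi>\<subseteq>I. \<exists>x\<in>X. \<forall>i\<in>I. (T ^^ i) x \<in> (if i \<in> \<xi> then A1 else A0))"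

lemma funpow_image_subset: "T ` X \<subseteq> X \<Longrightarrow> (T ^^ i) ` X \<subseteq> X"
  by (induction i) auto

lemma continuous_on_funpow:
  assumes "continuous_on X T" "T ` X \<subseteq> X"
  shows "continuous_on X (T ^^ i)"
proof (induction i)
  case (Suc i)
  then show ?case
    using assms funpow_image_subset[OF assms(2), of i]
    by (auto intro: continuous_on_compose2[of X T X "T ^^ i"])
qed (simp add: continuous_on_id)

lemma independence_set_subset:
  "independence_set X T A0 A1 I \<Longrightarrow> J \<subseteq> I \<Longrightarrow> independence_set X T A0 A1 J"
  unfolding independence_set_def by (meson order_trans subsetD)

lemma independence_set_shift:
  assumes "independence_set X T A0 A1 I" "T ` X \<subseteq> X"
  shows "independence_set X T A0 A1 {i. i + j \<in> I}"
  unfolding independence_set_def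
proof (intro allI impI)
  fix \<xi> assume "\<xi> \<subseteq> {i. i + j \<in> I}"
  then have "(\<lambda>i. i + j) ` \<xi> \<subseteq> I" by auto
  then obtain x where "x \<in> X" and x: "\<forall>i\<in>I. (T ^^ i) x \<in> (if i \<in> (\<lambda>i. i + j) ` \<xi> then A1 else A0)"
    using assms(1) unfolding independence_set_def by blast
  have "(T ^^ i) ((T ^^ j) x) \<in> (if i \<in> \<xi> then A1 else A0)" if "i + j \<in> I" for i
    using x[rule_format, OF that] by (simp add: funpow_add image_iff split: if_splits)
  moreover have "(T ^^ j) x \<in> X"
    using funpow_image_subset[OF assms(2)] \<open>x \<in> X\<close> by blast
  ultimately show "\<exists>x\<in>X. \<forall>i\<in>{i. i + j \<in> I}. (T ^^ i) x \<in> (if i \<in> \<xi> then A1 else A0)"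
    by blast
qed

lemma independence_set_finite_character:
  fixes X :: "'a::metric_space set"
  assumes "compact X" "continuous_on X T" "T ` X \<subseteq> X" "closed A0" "closed A1"
    and finite_subsets: "\<And>F. F \<subseteq> J \<Longrightarrow> finite F \<Longrightarrow> independence_set X T A0 A1 F"
  shows "independence_set X T A0 A1 J"
  unfolding independence_set_def
proof (intro allI impI)
  fix \<xi> assume "\<xi> \<subseteq> J"
  define C where "C i = X \<inter> (T ^^ i) -` (if i \<in> \<xi> then A1 else A0)" for i
  have "X \<inter> (\<Inter>i\<in>J. C i) \<noteq> {}"
  proof (rule compact_imp_fip_image[OF assms(1)])
    fix i
    show "closed (C i)"
      unfolding C_def using assms(4,5) compact_imp_closed[OF assms(1)] continuous_on_funpow[OF assms(2,3)]
      by (auto intro!: continuous_closed_preimage)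
  next
    fix F assume "finite F" "F \<subseteq> J"
    then obtain x where "x \<in> X" "\<forall>i\<in>F. (T ^^ i) x \<in> (if i \<in> \<xi> \<inter> F then A1 else A0)"
      using finite_subsets unfolding independence_set_def by (meson inf_le2)
    then show "X \<inter> (\<Inter>i\<in>F. C i) \<noteq> {}"
      unfolding C_def by auto
  qed
  then obtain x where "x \<in> X" "\<forall>i\<in>J. x \<in> C i" by blast
  then show "\<exists>x\<in>X. \<forall>i\<in>J. (T ^^ i) x \<in> (if i \<in> \<xi> then A1 else A0)"
    unfolding C_def by blast
qed

definition shatters :: "'b set set \<Rightarrow> 'b set \<Rightarrow> bool" where
  "shatters F I \<longleftrightarrow> (\<forall>\<xi>\<subseteq>I. \<exists>B\<in>F. B \<inter> I = \<xi>)"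

definition deletion :: "'b \<Rightarrow> 'b set set \<Rightarrow> 'b set set" where
  "deletion a F = {B \<in> F. a \<notin> B}"

definition link :: "'b \<Rightarrow> 'b set set \<Rightarrow> 'b set set" where
  "link a F = (\<lambda>B. B - {a}) ` {B \<in> F. a \<in> B}"

lemma card_deletion_link:
  assumes "finite F"
  shows "card F = card (deletion a F \<union> link a F) + card (deletion a F \<inter> link a F)"
proof -
  have "finite (deletion a F)" "finite {B \<in> F. a \<in> B}" "finite (link a F)"
    using assms by (auto simp: deletion_def link_def)
  moreover have "deletion a F \<union> {B \<in> F. a \<in> B} = F" "deletion a F \<inter> {B \<in> F. a \<in> B} = {}"
    by (auto simp: deletion_def)
  ultimately have "card F = card (deletion a F) + card {B \<in> F. a \<in> B}"
    using card_Un_disjoint[of "deletion a F" "{B \<in> F. a \<in> B}"] by simp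
  moreover have "inj_on (\<lambda>B. B - {a}) {B \<in> F. a \<in> B}"
    by (rule inj_onI) (metis insert_Diff mem_Collect_eq)
  then have "card (link a F) = card {B \<in> F. a \<in> B}"
    unfolding link_def by (rule card_image)
  ultimately show ?thesis
    using card_Un_Int[OF \<open>finite (deletion a F)\<close> \<open>finite (link a F)\<close>] by linarith
qed

lemma shatters_if_shatters_deletion_link_Un:
  assumes "shatters (deletion a F \<union> link a F) I" "a \<notin> I"
  shows "shatters F I"
  unfolding shatters_def
proof (intro allI impI)
  fix \<xi> assume "\<xi> \<subseteq> I"
  then obtain B where "B \<in> deletion a F \<union> link a F" "B \<inter> I = \<xi>"
    using assms(1) unfolding shatters_def by blast
  then show "\<exists>B\<in>F. B \<inter> I = \<xi>"
    using assms(2) unfolding deletion_def link_def by blast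
qed

lemma shatters_if_shatters_deletion_link_Int:
  assumes "shatters (deletion a F \<inter> link a F) I" "a \<notin> I"
  shows "shatters F (insert a I)"
  unfolding shatters_def
proof (intro allI impI)
  fix \<xi> assume \<xi>: "\<xi> \<subseteq> insert a I"
  then have "\<xi> - {a} \<subseteq> I" by blast
  then obtain B where B: "B \<in> deletion a F \<inter> link a F" "B \<inter> I = \<xi> - {a}"
    using assms(1) unfolding shatters_def by blast
  then have "a \<notin> B" "B \<in> F"
    by (auto simp: deletion_def)
  obtain B' where "B' \<in> F" "a \<in> B'" "B = B' - {a}"
    using B(1) by (auto simp: link_def)
  then have "insert a B \<in> F" by (simp add: insert_absorb)
  show "\<exists>B\<in>F. B \<inter> insert a I = \<xi>"
  proof (cases "a \<in> \<xi>")
    case True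
    then have "insert a B \<inter> insert a I = \<xi>" using B(2) by blast
    then show ?thesis using \<open>insert a B \<in> F\<close> by blast
  next
    case False
    then have "B \<inter> insert a I = \<xi>" using B(2) \<open>a \<notin> B\<close> \<xi> by blast
    then show ?thesis using \<open>B \<in> F\<close> by blast
  qed
qed

text \<open>Pajor's form of the Sauer--Shelah lemma.\<close>

lemma card_le_card_shattered_subsets:
  assumes "finite D" "F \<subseteq> Pow D"
  shows "card F \<le> card {I. I \<subseteq> D \<and> shatters F I}"
  using assms
proof (induction D arbitrary: F rule: finite_induct)
  case empty
  show ?case
  proof (cases "F = {}")
    case False
    then have "F = {{}}" using empty by auto
    moreover have "{I. I \<subseteq> {} \<and> shatters {{}} I} = {{}}" by (auto simp: shatters_def)
    ultimately show ?thesis by (metis order_refl)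
  qed simp
next
  case (insert a D)
  define Sh where "Sh G = {I. I \<subseteq> D \<and> shatters G I}" for G
  let ?U = "deletion a F \<union> link a F" and ?I = "deletion a F \<inter> link a F"
  have "finite F"
    using insert.prems insert.hyps(1) by (meson finite_Pow_iff finite_insert finite_subset)
  have finite_Sh: "finite (Sh G)" for G
    by (rule finite_subset[of _ "Pow D"]) (auto simp: Sh_def insert.hyps(1))
  have "?U \<subseteq> Pow D" "?I \<subseteq> Pow D"
    using insert.prems by (auto simp: deletion_def link_def)
  then have "card F \<le> card (Sh ?U) + card (Sh ?I)"
    using card_deletion_link[OF \<open>finite F\<close>, of a] insert.IH by (simp add: Sh_def add_mono)
  also have "\<dots> = card (Sh ?U \<union> insert a ` Sh ?I)"
  proof -
    have "inj_on (insert a) (Sh ?I)"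
      using insert.hyps(2) unfolding Sh_def inj_on_def by (metis Diff_insert_absorb mem_Collect_eq subsetD)
    moreover have "Sh ?U \<inter> insert a ` Sh ?I = {}"
      using insert.hyps(2) by (auto simp: Sh_def)
    ultimately show ?thesis
      using finite_Sh by (simp add: card_Un_disjoint card_image)
  qed
  also have "\<dots> \<le> card {I. I \<subseteq> insert a D \<and> shatters F I}"
  proof (rule card_mono)
    show "finite {I. I \<subseteq> insert a D \<and> shatters F I}" using insert.hyps(1) by simp
    show "Sh ?U \<union> insert a ` Sh ?I \<subseteq> {I. I \<subseteq> insert a D \<and> shatters F I}"
    proof (intro subsetI CollectI)
      fix J assume "J \<in> Sh ?U \<union> insert a ` Sh ?I"
      then consider "J \<in> Sh ?U" | I where "I \<in> Sh ?I" "J = insert a I" by blast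
      then show "J \<subseteq> insert a D \<and> shatters F J"
      proof cases
        case 1
        then have "a \<notin> J" using insert.hyps(2) by (auto simp: Sh_def)
        then show ?thesis using 1 shatters_if_shatters_deletion_link_Un by (auto simp: Sh_def)
      next
        case 2
        then have "a \<notin> I" using insert.hyps(2) by (auto simp: Sh_def)
        then show ?thesis using 2 shatters_if_shatters_deletion_link_Int by (auto simp: Sh_def)
      qed
    qed
  qed
  finally show ?case .
qed

lemma exists_large_shattered_set:
  fixes m :: real
  assumes "finite D" "F \<subseteq> Pow D" "card {I. I \<subseteq> D \<and> card I \<le> m} < card F"
  obtains I where "I \<subseteq> D" "shatters F I" "m < card I"
proof -
  have "\<not> {I. I \<subseteq> D \<and> shatters F I} \<subseteq> {I. I \<subseteq> D \<and> card I \<le> m}"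
  proof
    assume "{I. I \<subseteq> D \<and> shatters F I} \<subseteq> {I. I \<subseteq> D \<and> card I \<le> m}"
    then have "card {I. I \<subseteq> D \<and> shatters F I} \<le> card {I. I \<subseteq> D \<and> card I \<le> m}"
      by (rule card_mono[rotated]) (simp add: assms(1))
    then show False using card_le_card_shattered_subsets[OF assms(1,2)] assms(3) by linarith
  qed
  then obtain I where "I \<subseteq> D" "shatters F I" "\<not> card I \<le> m" by blast
  then show thesis using that by simp
qed

lemma sum_Pow_power_card:
  fixes t :: "'b::comm_semiring_1"
  assumes "finite D"
  shows "(\<Sum>I\<in>Pow D. t ^ card I) = (1 + t) ^ card D"
  using prod_add[OF assms, of "\<lambda>_. t" "\<lambda>_. 1"] by (simp add: add.commute)

lemma card_small_subsets_le_exp: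
  fixes t m :: real
  assumes "finite D" "0 < t" "t \<le> 1"
  shows "card {I. I \<subseteq> D \<and> card I \<le> m} \<le> exp (m * ln (1 / t) + t * card D)"
proof -
  define small where "small = {I. I \<subseteq> D \<and> card I \<le> m}"
  have "1 \<le> t ^ card I * exp (m * ln (1 / t))" if "I \<in> small" for I
  proof -
    have "ln (1 / t) = - ln t" "t ^ card I = exp (card I * ln t)"
      using assms(2) by (simp_all add: ln_div exp_of_nat_mult)
    then have "t ^ card I * exp (m * ln (1 / t)) = exp ((m - card I) * ln (1 / t))"
      by (simp add: exp_add[symmetric] algebra_simps)
    moreover have "0 \<le> (m - card I) * ln (1 / t)"
      using that assms(2,3) by (simp add: small_def)
    ultimately show ?thesis by simp
  qed
  then have "(\<Sum>I\<in>small. 1) \<le> (\<Sum>I\<in>small. t ^ card I * exp (m * ln (1 / t)))"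
    by (rule sum_mono)
  then have "card small \<le> (\<Sum>I\<in>small. t ^ card I) * exp (m * ln (1 / t))"
    by (simp add: sum_distrib_right)
  also have "(\<Sum>I\<in>small. t ^ card I) \<le> (\<Sum>I\<in>Pow D. t ^ card I)"
    using assms by (intro sum_mono2) (auto simp: small_def)
  also have "\<dots> = (1 + t) ^ card D" by (rule sum_Pow_power_card[OF assms(1)])
  also have "\<dots> \<le> exp t ^ card D"
    using assms(2) by (intro power_mono) (auto simp: add.commute exp_ge_add_one_self)
  finally show ?thesis
    by (simp add: small_def exp_add exp_of_nat_mult[symmetric] mult.commute)
qed

lemma exists_large_class:
  fixes b :: real
  assumes "finite S" "finite K" "f ` S \<subseteq> K" "card K * b < card S"
  obtains k where "k \<in> K" "b < card {x \<in> S. f x = k}"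
proof -
  have "K \<noteq> {}" using assms(3,4) by auto
  then obtain k where "k \<in> K" and k: "card S \<le> card (f -` {k} \<inter> S) * card K"
    using pigeonhole_card[of f S K] assms(1-3) by auto
  have "f -` {k} \<inter> S = {x \<in> S. f x = k}" by auto
  then have "card K * b < card K * card {x \<in> S. f x = k}"
    using k assms(4) by (simp add: mult.commute) (metis of_nat_le_iff of_nat_mult order_less_le_trans)
  then show thesis using that \<open>k \<in> K\<close> by (simp add: mult_less_cancel_left)
qed

lemma exists_dense_row:
  fixes \<theta> :: real and n :: nat
  assumes "I \<subseteq> {..<n} \<times> Y" "finite Y" "\<theta> * n * card Y < card I"
  obtains y where "y \<in> Y" "\<theta> * n < card {i. (i, y) \<in> I}"
proof -
  have "finite I" by (rule finite_subset[OF assms(1)]) (simp add: assms(2))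
  have "card {i. (i, y) \<in> I} = card {p \<in> I. snd p = y}" for y
    by (rule bij_betw_same_card[of "\<lambda>i. (i, y)"]) (auto simp: bij_betw_def inj_on_def image_def)
  moreover have "snd ` I \<subseteq> Y" "card Y * (\<theta> * n) < card I"
    using assms(1,3) by (auto simp: mult.commute)
  then obtain y where "y \<in> Y" "\<theta> * n < card {p \<in> I. snd p = y}"
    by (rule exists_large_class[OF \<open>finite I\<close> assms(2)])
  ultimately show thesis using that by simp
qed

lemma small_member_of_disjoint_family:
  assumes "finite U" "M > 0" "\<And>s. s < M \<Longrightarrow> A s \<subseteq> U"
    and disjoint: "\<And>s s'. s < M \<Longrightarrow> s' < M \<Longrightarrow> s \<noteq> s' \<Longrightarrow> A s \<inter> A s' = {}"
  obtains s where "s < M" "M * card (A s) \<le> card U"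
proof (rule ccontr)
  assume "\<not> thesis"
  then have large: "\<And>s. s < M \<Longrightarrow> card U < M * card (A s)"
    using that not_le by blast
  have "(\<Sum>s<M. card (A s)) = card (\<Union>s<M. A s)"
    using assms(1,3) disjoint by (intro card_UN_disjoint[symmetric]) (auto intro: finite_subset)
  also have "\<dots> \<le> card U"
    using assms(1,3) by (intro card_mono) auto
  finally have "M * (\<Sum>s<M. card (A s)) \<le> M * card U" by simp
  moreover have "(\<Sum>s<M. card U) < (\<Sum>s<M. M * card (A s))"
    using large assms(2) by (intro sum_strict_mono) auto
  ultimately show False by (simp add: sum_distrib_left mult.commute)
qed

definition orbit_visits :: "('a \<Rightarrow> 'a) \<Rightarrow> ('b \<Rightarrow> 'a set) \<Rightarrow> (nat \<times> 'b) set \<Rightarrow> 'a \<Rightarrow> (nat \<times> 'b) set" where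
  "orbit_visits T B U x = {(i, y) \<in> U. (T ^^ i) x \<in> B y}"

lemma independence_set_if_shatters_orbit_visits:
  assumes shatters: "shatters (orbit_visits T B U ` G) I" and "G \<subseteq> X" "I \<subseteq> U"
    and avoid: "\<And>x. x \<in> G \<Longrightarrow> orbit_visits T C U x \<inter> I = {}"
  shows "independence_set X T (- (B y \<union> C y)) (B y) {i. (i, y) \<in> I}"
  unfolding independence_set_def
proof (intro allI impI)
  fix \<xi> assume "\<xi> \<subseteq> {i. (i, y) \<in> I}"
  then have "(\<lambda>i. (i, y)) ` \<xi> \<subseteq> I" by auto
  then obtain x where "x \<in> G" and x: "orbit_visits T B U x \<inter> I = (\<lambda>i. (i, y)) ` \<xi>"
    using shatters unfolding shatters_def by blast
  have "(T ^^ i) x \<in> (if i \<in> \<xi> then B y else - (B y \<union> C y))" if "(i, y) \<in> I" for i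
  proof -
    have "(i, y) \<in> U" "(i, y) \<notin> orbit_visits T C U x" using that assms(3) avoid[OF \<open>x \<in> G\<close>] by auto
    moreover have "(i, y) \<in> orbit_visits T B U x \<longleftrightarrow> i \<in> \<xi>" using x that by auto
    ultimately show ?thesis by (auto simp: orbit_visits_def)
  qed
  then show "\<exists>x\<in>X. \<forall>i\<in>{i. (i, y) \<in> I}. (T ^^ i) x \<in> (if i \<in> \<xi> then B y else - (B y \<union> C y))"
    using \<open>x \<in> G\<close> assms(2) by blast
qed

lemma separated_set_inj_on_orbit_visits:
  fixes X :: "'a::metric_space set"
  assumes sep: "separated_set X T n \<epsilon> S" and "T ` X \<subseteq> X"
    and net: "\<And>x. x \<in> X \<Longrightarrow> \<exists>y\<in>Y. dist x y < \<epsilon> / 4" and "\<epsilon> / 4 \<le> r" "r < 3 * \<epsilon> / 4"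
  shows "inj_on (orbit_visits T (\<lambda>y. cball y r) ({..<n} \<times> Y)) S"
proof (rule inj_onI, rule ccontr)
  fix x x' assume "x \<in> S" "x' \<in> S" "x \<noteq> x'"
    and eq: "orbit_visits T (\<lambda>y. cball y r) ({..<n} \<times> Y) x = orbit_visits T (\<lambda>y. cball y r) ({..<n} \<times> Y) x'"
  then obtain i where "i < n" and far: "\<epsilon> < dist ((T ^^ i) x) ((T ^^ i) x')"
    using sep unfolding separated_set_def by blast
  have "(T ^^ i) x \<in> X"
    using funpow_image_subset[OF assms(2)] \<open>x \<in> S\<close> sep by (auto simp: separated_set_def)
  then obtain y where "y \<in> Y" and near: "dist ((T ^^ i) x) y < \<epsilon> / 4" using net by blast
  have "(i, y) \<in> orbit_visits T (\<lambda>y. cball y r) ({..<n} \<times> Y) x"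
    using \<open>i < n\<close> \<open>y \<in> Y\<close> near assms(4) by (auto simp: orbit_visits_def dist_commute)
  moreover have "r < dist y ((T ^^ i) x')"
    using far near dist_triangle[of "(T ^^ i) x" "(T ^^ i) x'" y] assms(5) by (simp add: dist_commute)
  then have "(i, y) \<notin> orbit_visits T (\<lambda>y. cball y r) ({..<n} \<times> Y) x'"
    by (auto simp: orbit_visits_def)
  ultimately show False using eq by simp
qed

definition annulus :: "'a::metric_space \<Rightarrow> real \<Rightarrow> real \<Rightarrow> 'a set" where
  "annulus y r R = ball y R - cball y r"

lemma exists_thin_shell:
  fixes \<rho> :: "nat \<Rightarrow> real" and \<theta> :: real and M :: nat
  assumes "mono \<rho>" "finite U" "0 < M" "1 \<le> \<theta> * M"
  obtains s where "s < M" "card (orbit_visits T (\<lambda>y. annulus y (\<rho> s) (\<rho> (Suc s))) U x) \<le> \<theta> * card U"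
proof -
  define shell where "shell s = orbit_visits T (\<lambda>y. annulus y (\<rho> s) (\<rho> (Suc s))) U x" for s
  have less: "shell s \<inter> shell s' = {}" if "s < s'" for s s'
  proof -
    have "\<rho> (Suc s) \<le> \<rho> s'" using assms(1) that by (simp add: monoD)
    then show ?thesis by (auto simp: shell_def orbit_visits_def annulus_def)
  qed
  have disjoint: "shell s \<inter> shell s' = {}" if "s < M" "s' < M" "s \<noteq> s'" for s s'
  proof (cases "s < s'")
    case False
    then have "s' < s" using that(3) by simp
    then show ?thesis using less[of s' s] by (simp add: Int_commute)
  qed (rule less)
  have subset: "shell s \<subseteq> U" if "s < M" for s by (auto simp: shell_def orbit_visits_def)
  obtain s where "s < M" "M * card (shell s) \<le> card U"
    by (rule small_member_of_disjoint_family[OF assms(2,3) subset disjoint])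
  then have "real M * card (shell s) \<le> card U"
    by (simp only: of_nat_mult[symmetric] of_nat_le_iff)
  moreover have "0 \<le> \<theta>"
  proof (rule ccontr)
    assume "\<not> 0 \<le> \<theta>"
    then have "\<theta> * M \<le> 0" by (simp add: mult_nonpos_nonneg)
    then show False using assms(4) by simp
  qed
  ultimately have "\<theta> * M * card (shell s) \<le> \<theta> * card U"
    by (simp add: mult.assoc mult_left_mono)
  moreover have "card (shell s) \<le> \<theta> * M * card (shell s)"
    using mult_right_mono[OF assms(4), of "card (shell s)"] by simp
  ultimately have "card (shell s) \<le> \<theta> * card U" by linarith
  then show thesis using that \<open>s < M\<close> by (simp add: shell_def)
qed

text \<open>Pigeonhole over the pairs (index of a thin shell, set of visits to it): the number of such
  pairs is at most \<open>M\<close> times the number of small subsets of \<open>U\<close>.\<close>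

lemma large_class_with_common_thin_shell:
  fixes \<rho> :: "nat \<Rightarrow> real" and \<theta> t :: real and M :: nat
  assumes "mono \<rho>" "finite U" "0 < M" "1 \<le> \<theta> * M" "0 < t" "t \<le> 1" "finite S"
    and large: "M * exp (\<theta> * card U * ln (1 / t) + t * card U) ^ 2 < card S"
  obtains s G W where "s < M" "G \<subseteq> S" "exp (\<theta> * card U * ln (1 / t) + t * card U) < card G"
    "\<forall>x\<in>G. orbit_visits T (\<lambda>y. annulus y (\<rho> s) (\<rho> (Suc s))) U x = W"
proof -
  define bound where "bound = exp (\<theta> * card U * ln (1 / t) + t * card U)"
  define shell where "shell s = orbit_visits T (\<lambda>y. annulus y (\<rho> s) (\<rho> (Suc s))) U" for s
  define small where "small = {W. W \<subseteq> U \<and> card W \<le> \<theta> * card U}"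
  have thin: "\<exists>s<M. card (shell s x) \<le> \<theta> * card U" for x
  proof -
    obtain s where "s < M" "card (shell s x) \<le> \<theta> * card U"
      unfolding shell_def by (rule exists_thin_shell[OF assms(1-4)])
    then show ?thesis by blast
  qed
  define key where "key x = (let s = SOME s. s < M \<and> card (shell s x) \<le> \<theta> * card U in (s, shell s x))" for x
  have keys: "key ` S \<subseteq> {..<M} \<times> small"
    using someI_ex[OF thin] by (auto simp: key_def Let_def small_def shell_def orbit_visits_def)
  have "finite small" using assms(2) by (simp add: small_def)
  have "card small \<le> bound"
    unfolding small_def bound_def by (rule card_small_subsets_le_exp[OF assms(2,5,6)])
  then have "card ({..<M} \<times> small) * bound \<le> M * bound ^ 2"
    by (simp add: card_cartesian_product power2_eq_square mult.assoc mult_left_mono mult_right_mono)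
  also have "\<dots> < card S" using large by (simp add: bound_def)
  finally obtain k where "k \<in> {..<M} \<times> small" "bound < card {x \<in> S. key x = k}"
    using exists_large_class[OF assms(7) _ keys] \<open>finite small\<close> by blast
  moreover obtain s W where "k = (s, W)" by fastforce
  ultimately have "s < M" "bound < card {x \<in> S. key x = (s, W)}" by auto
  moreover have "shell s x = W" if "x \<in> {x \<in> S. key x = (s, W)}" for x
    using that by (auto simp: key_def Let_def)
  ultimately show thesis
    using that[of s "{x \<in> S. key x = (s, W)}" W] by (auto simp: bound_def shell_def)
qed

lemma dense_independence_set_if_large_separated_set:
  fixes X :: "'a::metric_space set" and \<epsilon> \<theta> t :: real and \<rho> :: "nat \<Rightarrow> real" and n M :: nat
  assumes "T ` X \<subseteq> X" "finite Y" and net: "\<And>x. x \<in> X \<Longrightarrow> \<exists>y\<in>Y. dist x y < \<epsilon> / 4"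
    and \<rho>: "strict_mono \<rho>" "\<epsilon> / 4 \<le> \<rho> 0" "\<rho> M \<le> 3 * \<epsilon> / 4"
    and M: "0 < M" "1 \<le> \<theta> * M" and t: "0 < t" "t \<le> 1"
    and "finite S" and sep: "separated_set X T n \<epsilon> S"
    and large: "M * exp (\<theta> * (n * card Y) * ln (1 / t) + t * (n * card Y)) ^ 2 < card S"
  obtains y s I where "y \<in> Y" "s < M" "I \<subseteq> {..<n}" "\<theta> * n \<le> card I"
    "independence_set X T (- ball y (\<rho> (Suc s))) (cball y (\<rho> s)) I"
proof -
  define U where "U = {..<n} \<times> Y"
  define inner where "inner s = orbit_visits T (\<lambda>y. cball y (\<rho> s)) U" for s
  have "finite U" by (simp add: U_def assms(2))
  have "card U = n * card Y" by (simp add: U_def card_cartesian_product)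
  then have "M * exp (\<theta> * card U * ln (1 / t) + t * card U) ^ 2 < card S"
    using large by simp
  then obtain s G W where "s < M" "G \<subseteq> S"
    and big_class: "exp (\<theta> * card U * ln (1 / t) + t * card U) < card G"
    and shell_G: "\<forall>x\<in>G. orbit_visits T (\<lambda>y. annulus y (\<rho> s) (\<rho> (Suc s))) U x = W"
    by (rule large_class_with_common_thin_shell[OF strict_mono_mono[OF \<rho>(1)] \<open>finite U\<close> M t \<open>finite S\<close>])
  have "G \<subseteq> X" using \<open>G \<subseteq> S\<close> sep by (auto simp: separated_set_def)
  have "\<epsilon> / 4 \<le> \<rho> s" "\<rho> s < \<rho> (Suc s)" "\<rho> (Suc s) \<le> 3 * \<epsilon> / 4"
    using \<rho>(2,3) strict_mono_less_eq[OF \<rho>(1), of 0 s] strict_mono_less_eq[OF \<rho>(1), of "Suc s" M]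
      \<open>s < M\<close> by (simp_all add: strict_mono_less[OF \<rho>(1)])
  then have "inj_on (inner s) S"
    unfolding inner_def U_def by (intro separated_set_inj_on_orbit_visits[OF sep assms(1) net]) auto
  then have "card (inner s ` G) = card G"
    using \<open>G \<subseteq> S\<close> by (meson card_image inj_on_subset)
  have "inner s ` G \<subseteq> Pow (U - W)"
    using shell_G by (auto simp: inner_def orbit_visits_def annulus_def)
  moreover have "card {I. I \<subseteq> U - W \<and> card I \<le> \<theta> * card U} < card (inner s ` G)"
  proof -
    have "card {I. I \<subseteq> U - W \<and> card I \<le> \<theta> * card U} \<le> card {I. I \<subseteq> U \<and> card I \<le> \<theta> * card U}"
      by (rule card_mono) (use \<open>finite U\<close> in auto)
    then have "card {I. I \<subseteq> U - W \<and> card I \<le> \<theta> * card U} < real (card (inner s ` G))"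
      using card_small_subsets_le_exp[OF \<open>finite U\<close> t, of "\<theta> * card U"] big_class
        \<open>card (inner s ` G) = card G\<close> by linarith
    then show ?thesis by simp
  qed
  ultimately obtain I where I: "I \<subseteq> U - W" "shatters (inner s ` G) I" "\<theta> * card U < card I"
    by (rule exists_large_shattered_set[OF finite_Diff[OF \<open>finite U\<close>]])
  have "I \<subseteq> {..<n} \<times> Y" using I(1) by (auto simp: U_def)
  moreover have "\<theta> * n * card Y < card I"
    using I(3) \<open>card U = n * card Y\<close> by (simp add: mult.assoc)
  ultimately obtain y where "y \<in> Y" "\<theta> * n < card {i. (i, y) \<in> I}"
    by (rule exists_dense_row[OF _ assms(2)])
  have "independence_set X T (- (cball y (\<rho> s) \<union> annulus y (\<rho> s) (\<rho> (Suc s))))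
      (cball y (\<rho> s)) {i. (i, y) \<in> I}"
  proof (rule independence_set_if_shatters_orbit_visits)
    show "shatters (orbit_visits T (\<lambda>y. cball y (\<rho> s)) U ` G) I" using I(2) by (simp add: inner_def)
    show "orbit_visits T (\<lambda>y. annulus y (\<rho> s) (\<rho> (Suc s))) U x \<inter> I = {}" if "x \<in> G" for x
      using shell_G that I(1) by auto
  qed (use \<open>G \<subseteq> X\<close> I(1) in auto)
  moreover have "- (cball y (\<rho> s) \<union> annulus y (\<rho> s) (\<rho> (Suc s))) = - ball y (\<rho> (Suc s))"
    using \<open>\<rho> s < \<rho> (Suc s)\<close> by (auto simp: annulus_def)
  ultimately have "independence_set X T (- ball y (\<rho> (Suc s))) (cball y (\<rho> s)) {i. (i, y) \<in> I}"
    by simp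
  moreover have "{i. (i, y) \<in> I} \<subseteq> {..<n}" using I(1) by (auto simp: U_def)
  ultimately show thesis
    using that \<open>y \<in> Y\<close> \<open>s < M\<close> \<open>\<theta> * n < card {i. (i, y) \<in> I}\<close> less_imp_le by blast
qed

lemma exponential_budget:
  fixes c t \<theta> :: real and L n M :: nat
  assumes "0 < t" "t * L \<le> c * n / 8" "\<theta> * ln (1 / t) \<le> t" "ln M < c * n / 2" "0 < M"
  shows "M * exp (\<theta> * L * ln (1 / t) + t * L) ^ 2 < exp (c * n)"
proof -
  have "\<theta> * L * ln (1 / t) \<le> t * L"
    using mult_right_mono[OF assms(3), of "real L"] by (simp add: mult_ac)
  then have "exp (\<theta> * L * ln (1 / t) + t * L) ^ 2 \<le> exp (c * n / 2)"
    using assms(2) by (simp add: exp_of_nat_mult[symmetric])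
  moreover have "M < exp (c * n / 2)"
    using assms(4,5) by (metis exp_less_mono exp_ln of_nat_0_less_iff)
  ultimately have "M * exp (\<theta> * L * ln (1 / t) + t * L) ^ 2 < exp (c * n / 2) * exp (c * n / 2)"
    by (intro mult_less_le_imp_less) auto
  then show ?thesis by (simp add: exp_add[symmetric])
qed

lemma exists_counting_parameters:
  fixes c :: real and K :: nat
  assumes "0 < c"
  obtains t \<theta> :: real and M :: nat
  where "0 < t" "t \<le> 1" "t * K \<le> c / 8" "0 < \<theta>" "\<theta> * ln (1 / t) \<le> t" "0 < M" "1 \<le> \<theta> * M"
proof -
  define t where "t = min 1 (c / (8 * max 1 K))"
  define \<theta> where "\<theta> = t / (ln (1 / t) + 1)"
  define M where "M = nat \<lceil>1 / \<theta>\<rceil>"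
  have t: "0 < t" "t \<le> 1" using assms by (auto simp: t_def)
  have "t * K \<le> c / (8 * max 1 K) * K"
    by (intro mult_right_mono) (simp_all add: t_def)
  also have "\<dots> \<le> c / 8"
    using assms by (simp add: field_simps)
  finally have "t * K \<le> c / 8" .
  have "0 \<le> ln (1 / t)" using t by simp
  then have "0 < ln (1 / t) + 1" by linarith
  then have "\<theta> > 0" unfolding \<theta>_def using t(1) by (rule divide_pos_pos[rotated])
  have "\<theta> * ln (1 / t) = t * (ln (1 / t) / (ln (1 / t) + 1))" by (simp add: \<theta>_def)
  also have "\<dots> \<le> t"
    using \<open>0 < ln (1 / t) + 1\<close> t(1) by (intro mult_left_le) (simp_all add: divide_le_eq_1)
  finally have "\<theta> * ln (1 / t) \<le> t" .
  have "1 / \<theta> \<le> M" unfolding M_def by (rule real_nat_ceiling_ge)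
  then have "1 \<le> \<theta> * M" using \<open>\<theta> > 0\<close> by (simp add: field_simps)
  then have "0 < M" by (auto intro: gr0I)
  show thesis
    by (rule that[OF t \<open>t * K \<le> c / 8\<close> \<open>\<theta> > 0\<close> \<open>\<theta> * ln (1 / t) \<le> t\<close> \<open>0 < M\<close> \<open>1 \<le> \<theta> * M\<close>])
qed

text \<open>The pairs \<open>(A\<^sub>0, A\<^sub>1)\<close> are the complement of an open ball and a concentric closed ball, with
  centres in an \<open>\<epsilon>/4\<close>-net and radii taken from \<open>M\<close> equally spaced values in \<open>[\<epsilon>/4, 3\<epsilon>/4]\<close>.\<close>

lemma dense_independence_sets_if_large_separated_sets:
  fixes X :: "'a::metric_space set" and \<epsilon> c :: real
  assumes "compact X" "T ` X \<subseteq> X" "\<epsilon> > 0" "c > 0"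
  obtains P and \<theta> :: real and N0 :: nat where "finite P" "\<theta> > 0"
    "\<And>A0 A1. (A0, A1) \<in> P \<Longrightarrow> closed A0 \<and> closed A1 \<and> A0 \<inter> A1 = {}"
    "\<And>n S. N0 \<le> n \<Longrightarrow> finite S \<Longrightarrow> separated_set X T n \<epsilon> S \<Longrightarrow> exp (c * n) < card S \<Longrightarrow>
       \<exists>(A0, A1)\<in>P. \<exists>I\<subseteq>{..<n}. independence_set X T A0 A1 I \<and> \<theta> * n \<le> card I"
proof -
  obtain Y where "Y \<subseteq> X" "finite Y" and cover: "X \<subseteq> (\<Union>y\<in>Y. ball y (\<epsilon> / 4))"
    using compactE_image[OF assms(1), of X "\<lambda>x. ball x (\<epsilon> / 4)"] assms(3) by force
  have net: "\<exists>y\<in>Y. dist x y < \<epsilon> / 4" if "x \<in> X" for x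
    using cover that by (force simp: dist_commute)
  obtain t \<theta> :: real and M :: nat where t: "0 < t" "t \<le> 1" and "t * card Y \<le> c / 8"
    and "0 < \<theta>" "\<theta> * ln (1 / t) \<le> t" and M: "0 < M" "1 \<le> \<theta> * M"
    by (rule exists_counting_parameters[OF assms(4)])
  define \<rho> where "\<rho> s = \<epsilon> / 4 + s * (\<epsilon> / (2 * M))" for s :: nat
  define P where "P = (\<lambda>(y, s). (- ball y (\<rho> (Suc s)), cball y (\<rho> s))) ` (Y \<times> {..<M})"
  define N0 where "N0 = nat \<lceil>2 * ln M / c\<rceil> + 1"
  have "strict_mono \<rho>"
    using assms(3) M(1) by (intro strict_monoI) (simp add: \<rho>_def divide_strict_right_mono)
  have \<rho>_bounds: "\<epsilon> / 4 \<le> \<rho> 0" "\<rho> M \<le> 3 * \<epsilon> / 4" using M(1) by (simp_all add: \<rho>_def)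
  have "finite P" by (simp add: P_def \<open>finite Y\<close>)
  moreover have "closed A0 \<and> closed A1 \<and> A0 \<inter> A1 = {}" if A: "(A0, A1) \<in> P" for A0 A1
  proof -
    obtain y s where "A0 = - ball y (\<rho> (Suc s))" "A1 = cball y (\<rho> s)"
      using A by (auto simp: P_def)
    moreover have "\<rho> s < \<rho> (Suc s)" using \<open>strict_mono \<rho>\<close> by (simp add: strict_mono_less)
    ultimately show ?thesis by auto
  qed
  moreover have "\<exists>(A0, A1)\<in>P. \<exists>I\<subseteq>{..<n}. independence_set X T A0 A1 I \<and> \<theta> * n \<le> card I"
    if n: "N0 \<le> n" and S: "finite S" "separated_set X T n \<epsilon> S" "exp (c * n) < card S" for n S
  proof -
    have "2 * ln M / c < n" using n unfolding N0_def by linarith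
    then have "ln M < c * n / 2" using assms(4) by (simp add: field_simps)
    moreover have "t * real (n * card Y) \<le> c * n / 8"
      using mult_right_mono[OF \<open>t * card Y \<le> c / 8\<close>, of "real n"] by (simp add: mult_ac)
    ultimately have "M * exp (\<theta> * real (n * card Y) * ln (1 / t) + t * real (n * card Y)) ^ 2 < exp (c * n)"
      by (intro exponential_budget[OF t(1) _ \<open>\<theta> * ln (1 / t) \<le> t\<close> _ M(1)])
    then have large: "M * exp (\<theta> * (n * card Y) * ln (1 / t) + t * (n * card Y)) ^ 2 < card S"
      using S(3) by (simp only: of_nat_mult)
    obtain y s I where "y \<in> Y" "s < M" "I \<subseteq> {..<n}" "\<theta> * n \<le> card I"
      "independence_set X T (- ball y (\<rho> (Suc s))) (cball y (\<rho> s)) I"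
      by (rule dense_independence_set_if_large_separated_set[OF assms(2) \<open>finite Y\<close> net
            \<open>strict_mono \<rho>\<close> \<rho>_bounds M t S(1,2) large])
    moreover have "(- ball y (\<rho> (Suc s)), cball y (\<rho> s)) \<in> P"
      unfolding P_def using \<open>y \<in> Y\<close> \<open>s < M\<close> by (intro image_eqI[of _ _ "(y, s)"]) auto
    ultimately show ?thesis by auto
  qed
  ultimately show thesis by (rule that[OF _ \<open>\<theta> > 0\<close>])
qed

lemma topological_entropy_nonneg: "0 \<le> topological_entropy X T"
proof -
  have "0 \<le> ereal (ln (real (max_sep X T n 1)) / real n)" for n
    by (cases "max_sep X T n 1 = 0") auto
  then have "0 \<le> limsup (\<lambda>n. ereal (ln (real (max_sep X T n 1)) / real n))"
    by (intro le_Limsup) auto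
  also have "\<dots> \<le> topological_entropy X T"
    unfolding topological_entropy_def by (rule SUP_upper) simp
  finally show ?thesis .
qed

text \<open>If the cardinalities of separated sets are unbounded, then \<open>max_sep\<close> is the junk value
  \<open>Sup\<close> of an unbounded set of naturals, i.e.\ \<open>0\<close>; either way \<open>max_sep\<close> is exceeded.\<close>

lemma exists_separated_set_card_gt:
  fixes r :: real
  assumes "r < max_sep X T n \<epsilon>"
  obtains S where "finite S" "separated_set X T n \<epsilon> S" "r < card S"
proof -
  define A where "A = {card S | S. finite S \<and> separated_set X T n \<epsilon> S}"
  have "\<exists>a\<in>A. r < a"
  proof (cases "finite A")
    case True
    have "finite {} \<and> separated_set X T n \<epsilon> {}" by (simp add: separated_set_def)
    then have "card {} \<in> A" unfolding A_def by (intro CollectI exI[of _ "{}"]) simp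
    then have "A \<noteq> {}" by blast
    then have "Sup A \<in> A" using True by (simp add: cSup_eq_Max[OF True] Max_in)
    then show ?thesis using assms by (auto simp: max_sep_def A_def)
  next
    case False
    then obtain a where "a \<in> A" "nat \<lceil>r\<rceil> < a" using infinite_nat_iff_unbounded by blast
    then show ?thesis by (intro bexI[of _ a]) linarith+
  qed
  then show thesis using that unfolding A_def by blast
qed

lemma frequently_large_separated_sets_if_entropy_pos:
  assumes "0 < topological_entropy X T"
  obtains \<epsilon> c :: real where "0 < \<epsilon>" "0 < c"
    "frequently (\<lambda>n. \<exists>S. finite S \<and> separated_set X T n \<epsilon> S \<and> exp (c * n) < card S) sequentially"
proof -
  define f where "f \<epsilon> n = ereal (ln (real (max_sep X T n \<epsilon>)) / real n)" for \<epsilon> n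
  obtain \<epsilon> :: real where "0 < \<epsilon>" and "0 < limsup (f \<epsilon>)"
    using assms unfolding topological_entropy_def less_SUP_iff f_def by auto
  then obtain c where "0 < ereal c" "ereal c < limsup (f \<epsilon>)"
    using ereal_dense2 by blast
  have "frequently (\<lambda>n. ereal c < f \<epsilon> n) sequentially"
  proof (rule ccontr)
    assume "\<not> frequently (\<lambda>n. ereal c < f \<epsilon> n) sequentially"
    then have "eventually (\<lambda>n. f \<epsilon> n \<le> ereal c) sequentially"
      by (simp add: not_frequently not_less)
    then have "limsup (f \<epsilon>) \<le> ereal c" by (rule Limsup_bounded)
    then show False using \<open>ereal c < limsup (f \<epsilon>)\<close> by simp
  qed
  then have "frequently (\<lambda>n. \<exists>S. finite S \<and> separated_set X T n \<epsilon> S \<and> exp (c * n) < card S) sequentially"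
  proof (rule frequently_elim1)
    fix n assume "ereal c < f \<epsilon> n"
    then have gt: "c < ln (real (max_sep X T n \<epsilon>)) / real n" by (simp add: f_def)
    then have "0 < n" using \<open>0 < ereal c\<close> by (cases "n = 0") auto
    then have "c * n < ln (real (max_sep X T n \<epsilon>))" using gt by (simp add: field_simps)
    moreover have "0 < max_sep X T n \<epsilon>"
      using calculation \<open>0 < ereal c\<close> \<open>0 < n\<close> by (cases "max_sep X T n \<epsilon> = 0") (auto simp: mult_less_0_iff)
    ultimately have "exp (c * n) < max_sep X T n \<epsilon>"
      by (metis exp_less_mono exp_ln of_nat_0_less_iff)
    then obtain S where "finite S" "separated_set X T n \<epsilon> S" "exp (c * n) < card S"
      by (rule exists_separated_set_card_gt)
    then show "\<exists>S. finite S \<and> separated_set X T n \<epsilon> S \<and> exp (c * n) < card S" by blast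
  qed
  with \<open>0 < \<epsilon>\<close> \<open>0 < ereal c\<close> show thesis using that by simp
qed

lemma frequently_dense_independence_sets_if_entropy_pos:
  fixes X :: "'a::metric_space set"
  assumes "compact X" "T ` X \<subseteq> X" "0 < topological_entropy X T"
  obtains A0 A1 and \<theta> :: real where "closed A0" "closed A1" "A0 \<inter> A1 = {}" "\<theta> > 0"
    "frequently (\<lambda>n. \<exists>I\<subseteq>{..<n}. independence_set X T A0 A1 I \<and> \<theta> * n \<le> card I) sequentially"
proof -
  obtain \<epsilon> c :: real where "0 < \<epsilon>" "0 < c" and large:
    "frequently (\<lambda>n. \<exists>S. finite S \<and> separated_set X T n \<epsilon> S \<and> exp (c * n) < card S) sequentially"
    by (rule frequently_large_separated_sets_if_entropy_pos[OF assms(3)])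
  show thesis
  proof (rule dense_independence_sets_if_large_separated_sets[OF assms(1,2) \<open>0 < \<epsilon>\<close> \<open>0 < c\<close>])
    fix P and \<theta> :: real and N0 :: nat
    assume "finite P" "\<theta> > 0"
      and P: "\<And>A0 A1. (A0, A1) \<in> P \<Longrightarrow> closed A0 \<and> closed A1 \<and> A0 \<inter> A1 = {}"
      and dense: "\<And>n S. N0 \<le> n \<Longrightarrow> finite S \<Longrightarrow> separated_set X T n \<epsilon> S \<Longrightarrow> exp (c * n) < card S \<Longrightarrow>
        \<exists>(A0, A1)\<in>P. \<exists>I\<subseteq>{..<n}. independence_set X T A0 A1 I \<and> \<theta> * n \<le> card I"
    have "frequently (\<lambda>n. \<exists>(A0, A1)\<in>P. \<exists>I\<subseteq>{..<n}. independence_set X T A0 A1 I \<and> \<theta> * n \<le> card I)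
        sequentially"
      using frequently_eventually_conj[OF large eventually_ge_at_top[of N0]]
    proof (rule frequently_elim1)
      fix n assume "N0 \<le> n \<and> (\<exists>S. finite S \<and> separated_set X T n \<epsilon> S \<and> exp (c * n) < card S)"
      then obtain S where "N0 \<le> n" "finite S" "separated_set X T n \<epsilon> S" "exp (c * n) < card S"
        by blast
      then show "\<exists>(A0, A1)\<in>P. \<exists>I\<subseteq>{..<n}. independence_set X T A0 A1 I \<and> \<theta> * n \<le> card I"
        by (rule dense)
    qed
    then have "\<exists>p\<in>P. frequently (\<lambda>n. case p of (A0, A1) \<Rightarrow>
        \<exists>I\<subseteq>{..<n}. independence_set X T A0 A1 I \<and> \<theta> * n \<le> card I) sequentially"
      by (rule frequently_bex_finite[OF \<open>finite P\<close>])
    then obtain A0 A1 where "(A0, A1) \<in> P" and freq: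
      "frequently (\<lambda>n. \<exists>I\<subseteq>{..<n}. independence_set X T A0 A1 I \<and> \<theta> * n \<le> card I) sequentially"
      by auto
    show thesis
      by (rule that[OF _ _ _ \<open>\<theta> > 0\<close> freq]) (use P[OF \<open>(A0, A1) \<in> P\<close>] in auto)
  qed
qed

definition prefix_dense :: "real \<Rightarrow> nat \<Rightarrow> nat set \<Rightarrow> bool" where
  "prefix_dense \<delta> l J \<longleftrightarrow> J \<subseteq> {..<l} \<and> (\<forall>m\<le>l. \<delta> * m \<le> card (J \<inter> {..<m}))"

lemma discrete_rising_sun:
  fixes I :: "nat set" and \<delta> :: real
  assumes I: "I \<subseteq> {..<n}" and "0 \<le> \<delta>" and card_I: "2 * \<delta> * n \<le> card I"
  obtains j where "j \<le> n" "\<delta> * n \<le> n - j" "\<And>m. j + m \<le> n \<Longrightarrow> \<delta> * m \<le> card (I \<inter> {j..<j + m})"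
proof -
  define S where "S k = real (card (I \<inter> {..<k})) - \<delta> * k" for k
  define j where "j = arg_min_on S {..n}"
  have j: "j \<le> n" "\<And>k. k \<le> n \<Longrightarrow> S j \<le> S k"
    using arg_min_if_finite[of "{..n}" S] by (auto simp: j_def not_less)
  have split: "card (I \<inter> {..<k}) = card (I \<inter> {..<j}) + card (I \<inter> {j..<k})" if "j \<le> k" for k
  proof -
    have "I \<inter> {..<k} = (I \<inter> {..<j}) \<union> (I \<inter> {j..<k})" using that by auto
    then show ?thesis by (simp add: card_Un_disjoint disjoint_iff)
  qed
  have dense_from_j: "\<delta> * m \<le> card (I \<inter> {j..<j + m})" if "j + m \<le> n" for m
    using j(2)[OF that] split[of "j + m"] unfolding S_def by (simp add: algebra_simps)
  have "S n = S j + card (I \<inter> {j..<n}) - \<delta> * (real n - real j)"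
    using split[of n] j(1) by (simp add: S_def algebra_simps)
  moreover have "S j \<le> 0" using j(2)[of 0] by (simp add: S_def)
  moreover have "\<delta> * n \<le> S n"
    using I card_I unfolding S_def by (simp add: Int_absorb2)
  moreover have "card (I \<inter> {j..<n}) \<le> real n - real j"
    using card_mono[of "{j..<n}" "I \<inter> {j..<n}"] j(1) by (simp add: of_nat_diff)
  moreover have "0 \<le> \<delta> * (real n - real j)" using j(1) \<open>0 \<le> \<delta>\<close> by simp
  ultimately have "\<delta> * n \<le> n - j" using j(1) by (simp add: of_nat_diff)
  with j(1) dense_from_j show thesis using that by blast
qed

lemma unbounded_prefix_dense_sets:
  fixes Q :: "nat set \<Rightarrow> bool" and \<theta> :: real
  assumes shift: "\<And>I j. Q I \<Longrightarrow> Q {i. i + j \<in> I}" and "\<theta> > 0"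
    and dense: "frequently (\<lambda>n. \<exists>I\<subseteq>{..<n}. Q I \<and> \<theta> * n \<le> card I) sequentially"
  shows "\<exists>l\<ge>N. \<exists>J. Q J \<and> prefix_dense (\<theta> / 2) l J"
proof -
  define \<delta> where "\<delta> = \<theta> / 2"
  have "\<delta> > 0" using \<open>\<theta> > 0\<close> by (simp add: \<delta>_def)
  obtain n where n: "nat \<lceil>N / \<delta>\<rceil> \<le> n" and "\<exists>I\<subseteq>{..<n}. Q I \<and> \<theta> * n \<le> card I"
    using dense unfolding frequently_sequentially by blast
  then obtain I where I: "I \<subseteq> {..<n}" "Q I" "\<theta> * n \<le> card I" by blast
  obtain j where j: "j \<le> n" "\<delta> * n \<le> n - j"
    and dense_from_j: "\<And>m. j + m \<le> n \<Longrightarrow> \<delta> * m \<le> card (I \<inter> {j..<j + m})"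
    using discrete_rising_sun[OF I(1), of \<delta>] \<open>\<delta> > 0\<close> I(3) by (auto simp: \<delta>_def)
  define J where "J = {i. i + j \<in> I}"
  have "N / \<delta> \<le> n" using n by linarith
  then have "N \<le> \<delta> * n" using \<open>\<delta> > 0\<close> by (simp add: field_simps)
  then have "N \<le> n - j" using j(2) by linarith
  moreover have "J \<subseteq> {..<n - j}" using I(1) unfolding J_def by auto
  moreover have "card (J \<inter> {..<m}) = card (I \<inter> {j..<j + m})" for m
  proof (rule bij_betw_same_card)
    show "bij_betw (\<lambda>i. i + j) (J \<inter> {..<m}) (I \<inter> {j..<j + m})"
      by (rule bij_betw_byWitness[of _ "\<lambda>i. i - j"]) (auto simp: J_def)
  qed
  ultimately have "prefix_dense \<delta> (n - j) J"
    unfolding prefix_dense_def using dense_from_j j(1) by auto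
  moreover have "Q J" unfolding J_def using shift I(2) .
  ultimately show ?thesis using \<open>N \<le> n - j\<close> by (auto simp: \<delta>_def)
qed

text \<open>A Koenig-type compactness argument: a set \<open>B \<subseteq> {..<m}\<close> is kept as long as it is the
  initial segment of prefix-dense sets of arbitrarily large length; such sets can always be
  extended by one step, and the union of the resulting chain is the required infinite set.\<close>

lemma infinite_set_if_unbounded_prefix_dense_sets:
  fixes Q :: "nat set \<Rightarrow> bool" and \<delta> :: real
  assumes hereditary: "\<And>I J. Q I \<Longrightarrow> J \<subseteq> I \<Longrightarrow> Q J" and "\<delta> > 0"
    and unbounded: "\<And>N. \<exists>l\<ge>N. \<exists>J. Q J \<and> prefix_dense \<delta> l J"
  obtains J where "infinite J" "\<And>F. F \<subseteq> J \<Longrightarrow> finite F \<Longrightarrow> Q F"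
proof -
  define G where
    "G m B \<longleftrightarrow> (\<forall>N. \<exists>l\<ge>max N m. \<exists>J. Q J \<and> prefix_dense \<delta> l J \<and> J \<inter> {..<m} = B)" for m B
  have G_subset: "G m B \<Longrightarrow> B \<subseteq> {..<m}" for m B
    unfolding G_def by blast
  have G_witness: "\<exists>l J. Q J \<and> prefix_dense \<delta> l J \<and> m \<le> l \<and> J \<inter> {..<m} = B" if "G m B" for m B
    using that[unfolded G_def, rule_format, of 0] by auto
  have "G 0 {}"
    unfolding G_def using unbounded by simp
  moreover have "\<exists>B'. G (Suc m) B' \<and> B' \<inter> {..<m} = B" if GB: "G m B" for m B
  proof (rule ccontr)
    assume "\<nexists>B'. G (Suc m) B' \<and> B' \<inter> {..<m} = B"
    moreover have "B \<inter> {..<m} = B" "insert m B \<inter> {..<m} = B" using G_subset[OF GB] by auto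
    ultimately have "\<not> G (Suc m) B" "\<not> G (Suc m) (insert m B)" by auto
    then obtain N1 N2 where
      N1: "\<not> (\<exists>l\<ge>max N1 (Suc m). \<exists>J. Q J \<and> prefix_dense \<delta> l J \<and> J \<inter> {..<Suc m} = B)" and
      N2: "\<not> (\<exists>l\<ge>max N2 (Suc m). \<exists>J. Q J \<and> prefix_dense \<delta> l J \<and> J \<inter> {..<Suc m} = insert m B)"
      unfolding G_def by blast
    obtain l J where l: "max (max (max N1 N2) (Suc m)) m \<le> l" "Q J" "prefix_dense \<delta> l J" "J \<inter> {..<m} = B"
      using GB[unfolded G_def, rule_format, of "max (max N1 N2) (Suc m)"] by blast
    then have "max N1 (Suc m) \<le> l" "max N2 (Suc m) \<le> l" by auto
    moreover have "J \<inter> {..<Suc m} = B \<or> J \<inter> {..<Suc m} = insert m B"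
      using l(4) by (auto simp: lessThan_Suc)
    ultimately show False using N1 N2 l(2,3) by blast
  qed
  ultimately have "\<exists>f. \<forall>m. G m (f m) \<and> f (Suc m) \<inter> {..<m} = f m"
    by (intro dependent_nat_choice) auto
  then obtain f where f: "\<And>m. G m (f m)" "\<And>m. f (Suc m) \<inter> {..<m} = f m"
    by blast
  have coherent: "f (m + k) \<inter> {..<m} = f m" for m k
  proof (induction k)
    case 0
    then show ?case using G_subset[OF f(1)] by auto
  next
    case (Suc k)
    have "f (Suc (m + k)) \<inter> {..<m} = f (Suc (m + k)) \<inter> {..<m + k} \<inter> {..<m}" by auto
    then show ?case using f(2) Suc by simp
  qed
  define J where "J = {i. i \<in> f (Suc i)}"
  have J_prefix: "J \<inter> {..<m} = f m" for m
  proof -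
    have "i \<in> f (Suc i) \<longleftrightarrow> i \<in> f m" if "i < m" for i
      using coherent[of "Suc i" "m - Suc i"] that by auto
    then show ?thesis using G_subset[OF f(1)] unfolding J_def by auto
  qed
  have "infinite J"
  proof
    assume "finite J"
    obtain m :: nat where m: "card J / \<delta> < m" using reals_Archimedean2 by blast
    obtain l J' where "prefix_dense \<delta> l J'" "m \<le> l" "J' \<inter> {..<m} = f m"
      using G_witness[OF f(1)] by blast
    then have "\<delta> * m \<le> card (f m)" unfolding prefix_dense_def by auto
    also have "card (f m) \<le> card J"
      using card_mono[OF \<open>finite J\<close>, of "f m"] J_prefix[of m] by auto
    finally show False using m \<open>\<delta> > 0\<close> by (simp add: field_simps)
  qed
  moreover have "Q F" if "F \<subseteq> J" "finite F" for F
  proof -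
    obtain m where "F \<subseteq> {..<m}" using \<open>finite F\<close> finite_nat_bounded by blast
    then have "F \<subseteq> f m" using that J_prefix[of m] by blast
    moreover obtain l J' where "Q J'" "J' \<inter> {..<m} = f m"
      using G_witness[OF f(1)] by blast
    ultimately show ?thesis using hereditary by blast
  qed
  ultimately show thesis using that by blast
qed

lemma infinite_independence_set_if_frequently_dense:
  fixes X :: "'a::metric_space set" and \<theta> :: real
  assumes "compact X" "continuous_on X T" "T ` X \<subseteq> X" "closed A0" "closed A1" "\<theta> > 0"
    and dense: "frequently (\<lambda>n. \<exists>I\<subseteq>{..<n}. independence_set X T A0 A1 I \<and> \<theta> * n \<le> card I) sequentially"
  obtains J where "infinite J" "independence_set X T A0 A1 J"
proof (rule infinite_set_if_unbounded_prefix_dense_sets[of "independence_set X T A0 A1" "\<theta> / 2"])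
  show "independence_set X T A0 A1 J" if "independence_set X T A0 A1 I" "J \<subseteq> I" for I J
    using that by (rule independence_set_subset)
  show "0 < \<theta> / 2" using assms(6) by simp
  show "\<exists>l\<ge>N. \<exists>J. independence_set X T A0 A1 J \<and> prefix_dense (\<theta> / 2) l J" for N
    by (rule unbounded_prefix_dense_sets[OF independence_set_shift[OF _ assms(3)] assms(6) dense])
  fix J assume "infinite J" and finite_subsets: "\<And>F. F \<subseteq> J \<Longrightarrow> finite F \<Longrightarrow> independence_set X T A0 A1 F"
  then show thesis
    using that independence_set_finite_character[OF assms(1-5) finite_subsets] by blast
qed

lemma inj_subseq_if_finite_fibres:
  fixes \<tau> :: "nat \<Rightarrow> 'b"
  assumes fibres: "\<And>v. finite {k. \<tau> k = v}"
  obtains r :: "nat \<Rightarrow> nat" where "strict_mono r" "inj (\<tau> \<circ> r)"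
proof -
  define K where "K = {k. \<forall>j<k. \<tau> j \<noteq> \<tau> k}"
  have "\<tau> k \<in> \<tau> ` K" for k
  proof -
    define k0 where "k0 = (LEAST j. \<tau> j = \<tau> k)"
    have "\<tau> k0 = \<tau> k" "\<forall>j<k0. \<tau> j \<noteq> \<tau> k"
      unfolding k0_def by (auto intro: LeastI dest: not_less_Least)
    then have "k0 \<in> K" unfolding K_def by simp
    with \<open>\<tau> k0 = \<tau> k\<close> show ?thesis by (metis imageI)
  qed
  then have range_eq: "range \<tau> = \<tau> ` K" by auto
  have "infinite (range \<tau>)"
  proof
    assume "finite (range \<tau>)"
    then have "finite (\<Union>v\<in>range \<tau>. {k. \<tau> k = v})" using fibres by blast
    moreover have "(\<Union>v\<in>range \<tau>. {k. \<tau> k = v}) = UNIV" by auto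
    ultimately show False by simp
  qed
  then have "infinite K" unfolding range_eq by blast
  then obtain r :: "nat \<Rightarrow> nat" where r: "strict_mono r" "\<And>k. r k \<in> K"
    using infinite_enumerate by blast
  have "inj_on \<tau> K"
  proof (rule inj_onI)
    fix k k' assume "k \<in> K" "k' \<in> K" "\<tau> k = \<tau> k'"
    then show "k = k'" unfolding K_def by (cases k k' rule: linorder_cases) auto
  qed
  moreover have "inj r" using r(1) by (rule strict_mono_imp_inj_on)
  ultimately have "inj (\<tau> \<circ> r)"
    using r(2) by (auto intro: comp_inj_on inj_on_subset)
  with r(1) show thesis using that by blast
qed

text \<open>The
  limit point delivered by the Frechet property differs from all terms of the approximating
  sequence, so in a T1 space each term can occur only finitely often.\<close>

lemma compact_Frechet_space_inj_convergent_subseq: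
  fixes g :: "nat \<Rightarrow> 'a"
  assumes "compact_space S" "t1_space S" "Frechet_space S"
    and "inj g" "range g \<subseteq> topspace S"
  obtains \<nu> :: "nat \<Rightarrow> nat" and p where "inj \<nu>" "limitin S (g \<circ> \<nu>) p sequentially"
proof -
  obtain p where "p \<in> S derived_set_of range g"
    using compact_space_imp_Bolzano_Weierstrass[OF assms(1) range_inj_infinite[OF assms(4)] assms(5)]
    by blast
  then have "p \<in> S closure_of (range g - {p})"
    unfolding in_derived_set_of in_closure_of by blast
  moreover have "range g - {p} \<subseteq> topspace S" using assms(5) by blast
  ultimately obtain \<sigma> :: "nat \<Rightarrow> _" where \<sigma>: "range \<sigma> \<subseteq> range g - {p}" "limitin S \<sigma> p sequentially"
    using assms(3) unfolding Frechet_space_def by blast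
  define \<tau> where "\<tau> k = inv g (\<sigma> k)" for k
  have \<sigma>_eq: "\<sigma> = g \<circ> \<tau>"
  proof
    fix k
    have "\<sigma> k \<in> range g" using \<sigma>(1) by blast
    then show "\<sigma> k = (g \<circ> \<tau>) k" by (simp add: \<tau>_def f_inv_into_f)
  qed
  have "finite {k. \<tau> k = v}" for v
  proof (rule ccontr)
    assume "infinite {k. \<tau> k = v}"
    then obtain r :: "nat \<Rightarrow> nat" where r: "strict_mono r" "\<And>k. \<tau> (r k) = v"
      using infinite_enumerate by blast
    then have "limitin S (\<lambda>k. g v) p sequentially"
      using limitin_subsequence[OF r(1) \<sigma>(2)] by (simp add: \<sigma>_eq comp_def)
    then have "p = g v"
      by (simp add: limitin_const_iff[OF assms(2) trivial_limit_sequentially])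
    moreover have "g v = \<sigma> (r 0)" by (simp add: \<sigma>_eq r(2))
    ultimately show False using \<sigma>(1) by blast
  qed
  then obtain r :: "nat \<Rightarrow> nat" where r: "strict_mono r" "inj (\<tau> \<circ> r)"
    by (rule inj_subseq_if_finite_fibres)
  have "limitin S (g \<circ> (\<tau> \<circ> r)) p sequentially"
    using limitin_subsequence[OF r(1) \<sigma>(2)] by (simp add: \<sigma>_eq comp_assoc)
  with r(2) show thesis using that by blast
qed

lemma restrict_funpow_in_topspace_ptwise_top:
  "T ` X \<subseteq> X \<Longrightarrow> restrict (T ^^ n) X \<in> topspace (ptwise_top X)"
  using funpow_image_subset[of T X n] by (auto simp: ptwise_top_def)

lemma restrict_funpow_in_enveloping_semigroup:
  assumes "T ` X \<subseteq> X"
  shows "restrict (T ^^ n) X \<in> enveloping_semigroup X T"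
proof -
  have "restrict (T ^^ n) X = restrict (zpow X T (int n)) X"
    by (simp add: zpow_def)
  then have "restrict (T ^^ n) X \<in> topspace (ptwise_top X) \<inter> range (\<lambda>n. restrict (zpow X T n) X)"
    using restrict_funpow_in_topspace_ptwise_top[OF assms] by blast
  then show ?thesis
    unfolding enveloping_semigroup_def by (rule subsetD[OF closure_of_subset_Int])
qed

lemma compact_space_enveloping_semigroup:
  assumes "compact X"
  shows "compact_space (subtopology (ptwise_top X) (enveloping_semigroup X T))"
proof -
  have "compact_space (ptwise_top X)"
    using assms by (auto simp: ptwise_top_def compact_space_product_topology intro!: compact_space_subtopology)
  then show ?thesis
    unfolding enveloping_semigroup_def
    by (intro compact_space_subtopology closedin_compact_space closedin_closure_of)
qed

lemma Hausdorff_space_ptwise_top: "Hausdorff_space (ptwise_top (X :: 'a::metric_space set))"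
  unfolding ptwise_top_def
  by (simp add: Hausdorff_space_product_topology Hausdorff_space_subtopology)

lemma limitin_ptwise_top_imp_tendsto:
  "limitin (ptwise_top X) f p F \<Longrightarrow> x \<in> X \<Longrightarrow> ((\<lambda>k. f k x) \<longlongrightarrow> p x) F"
  unfolding ptwise_top_def limitin_componentwise by (auto simp: limitin_subtopology)

text \<open>Along an infinite independence set \<open>J = {n\<^sub>0 < n\<^sub>1 < \<dots>}\<close> the maps \<open>T\<^sup>n\<^sup>\<^sub>k\<close> behave like
  the coordinate projections of \<open>2\<^sup>\<nat>\<close>: no injective sequence of them converges pointwise, because
  a point can be chosen whose orbit alternates between \<open>A\<^sub>0\<close> and \<open>A\<^sub>1\<close> along that sequence.\<close>

lemma not_Frechet_if_infinite_independence_set: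
  fixes X :: "'a::metric_space set"
  assumes "compact X" "T ` X \<subseteq> X" "closed A0" "closed A1" "A0 \<inter> A1 = {}"
    and "infinite J" "independence_set X T A0 A1 J"
  shows "\<not> Frechet_space (subtopology (ptwise_top X) (enveloping_semigroup X T))"
proof
  define E where "E = subtopology (ptwise_top X) (enveloping_semigroup X T)"
  assume "Frechet_space (subtopology (ptwise_top X) (enveloping_semigroup X T))"
  then have Frechet: "Frechet_space E" by (simp add: E_def)
  define n where "n = enumerate J"
  have "inj n" "\<And>k. n k \<in> J"
    unfolding n_def using inj_enumerate enumerate_in_set assms(6) by auto
  define g where "g k = restrict (T ^^ n k) X" for k
  have g_apply: "x \<in> X \<Longrightarrow> g k x = (T ^^ n k) x" for x k by (simp add: g_def)
  have pattern: "\<exists>x\<in>X. \<forall>k. g k x \<in> (if n k \<in> \<xi> then A1 else A0)" for \<xi>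
  proof -
    obtain x where "x \<in> X" "\<forall>i\<in>J. (T ^^ i) x \<in> (if i \<in> \<xi> \<inter> J then A1 else A0)"
      using assms(7) unfolding independence_set_def by (meson inf_le2)
    then show ?thesis using \<open>\<And>k. n k \<in> J\<close> by (auto simp: g_apply split del: if_split)
  qed
  have "inj g"
  proof (rule injI)
    fix k l assume "g k = g l"
    obtain x where x: "\<forall>m. g m x \<in> (if n m \<in> {n k} then A1 else A0)"
      using pattern by blast
    have "n l = n k"
    proof (rule ccontr)
      assume "n l \<noteq> n k"
      then have "g l x \<in> A0" using x[rule_format, of l] by simp
      moreover have "g l x \<in> A1" using x[rule_format, of k] \<open>g k = g l\<close> by simp
      ultimately show False using assms(5) by blast
    qed
    then show "k = l" using \<open>inj n\<close> by (simp add: inj_eq)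
  qed
  moreover have "range g \<subseteq> topspace E"
    using restrict_funpow_in_topspace_ptwise_top restrict_funpow_in_enveloping_semigroup assms(2)
    by (auto simp: E_def g_def)
  moreover have "compact_space E"
    unfolding E_def using assms(1) by (rule compact_space_enveloping_semigroup)
  moreover have "t1_space E"
    unfolding E_def
    by (intro Hausdorff_imp_t1_space Hausdorff_space_subtopology Hausdorff_space_ptwise_top)
  ultimately obtain \<nu> :: "nat \<Rightarrow> nat" and p where "inj \<nu>" and lim: "limitin E (g \<circ> \<nu>) p sequentially"
    using compact_Frechet_space_inj_convergent_subseq Frechet by blast
  obtain x where "x \<in> X" and x: "\<forall>k. g k x \<in> (if n k \<in> n ` \<nu> ` {k. even k} then A1 else A0)"
    using pattern by blast
  have "limitin (ptwise_top X) (g \<circ> \<nu>) p sequentially"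
    using lim by (simp add: E_def limitin_subtopology)
  then have lim_x: "(\<lambda>k. g (\<nu> k) x) \<longlonglongrightarrow> p x"
    using \<open>x \<in> X\<close> by (auto dest: limitin_ptwise_top_imp_tendsto)
  have alternating: "g (\<nu> k) x \<in> (if even k then A1 else A0)" for k
    using x[rule_format, of "\<nu> k"] \<open>inj n\<close> \<open>inj \<nu>\<close> by (simp add: inj_image_mem_iff)
  have "(\<lambda>k. g (\<nu> (2 * k)) x) \<longlonglongrightarrow> p x" "(\<lambda>k. g (\<nu> (2 * k + 1)) x) \<longlonglongrightarrow> p x"
    using LIMSEQ_subseq_LIMSEQ[OF lim_x, of "\<lambda>k. 2 * k"] LIMSEQ_subseq_LIMSEQ[OF lim_x, of "\<lambda>k. 2 * k + 1"]
    by (simp_all add: strict_mono_def comp_def)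
  moreover have "g (\<nu> (2 * k)) x \<in> A1" "g (\<nu> (2 * k + 1)) x \<in> A0" for k
    using alternating[of "2 * k"] alternating[of "2 * k + 1"] by simp_all
  ultimately have "p x \<in> A1" "p x \<in> A0"
    using closed_sequentially[OF assms(4), of "\<lambda>k. g (\<nu> (2 * k)) x"]
      closed_sequentially[OF assms(3), of "\<lambda>k. g (\<nu> (2 * k + 1)) x"] by simp_all
  then show False using assms(5) by blast
qed


theorem mainTheorem5:
  fixes X :: "'a::metric_space set" and T :: "'a \<Rightarrow> 'a"
  assumes "compact X"
    and "homeomorphism X X T (inv_into X T)"
    and "minimal_system X T"
    and "tame X T"
  shows "topological_entropy X T = 0"
proof -
  have "T ` X \<subseteq> X" "continuous_on X T"
    using assms(2) by (auto simp: homeomorphism_def)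
  have "\<not> 0 < topological_entropy X T"
  proof
    assume "0 < topological_entropy X T"
    then obtain A0 A1 and \<theta> :: real where A: "closed A0" "closed A1" "A0 \<inter> A1 = {}" and "\<theta> > 0"
      and dense: "frequently (\<lambda>n. \<exists>I\<subseteq>{..<n}. independence_set X T A0 A1 I \<and> \<theta> * n \<le> card I) sequentially"
      by (rule frequently_dense_independence_sets_if_entropy_pos[OF assms(1) \<open>T ` X \<subseteq> X\<close>])
    obtain J where "infinite J" "independence_set X T A0 A1 J"
      by (rule infinite_independence_set_if_frequently_dense[OF assms(1) \<open>continuous_on X T\<close>
            \<open>T ` X \<subseteq> X\<close> A(1,2) \<open>\<theta> > 0\<close> dense])
    then have "\<not> Frechet_space (subtopology (ptwise_top X) (enveloping_semigroup X T))"
      by (rule not_Frechet_if_infinite_independence_set[OF assms(1) \<open>T ` X \<subseteq> X\<close> A])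
    then show False using assms(4) unfolding tame_def by blast
  qed
  then show ?thesis using topological_entropy_nonneg[of X T] by simp
qed

end
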